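(* Let $n\geq 2$. In any presentation of the ring $\mathrm{Mat}_n(\mathbb{Z})$ (as a unital associative ring) by generators and relations, i.e. any isomorphism $\mathrm{Mat}_n(\mathbb{Z})\cong\mathbb{Z}\langle S\rangle/I$ where $\mathbb{Z}\langle S\rangle$ is the free unital associative ring on a finite set $S$ and $I$ is the two-sided ideal generated by a set of relations, the number of relations is at least the number $|S|$ of generators.
   Context: All rings are associative with unit; presentations are in the category of unital associative rings. *)

theory Defs
  imports "HOL-Algebra.QuotRing" "Jordan_Normal_Form.Matrix"
begin

text \<open>The free unital associative ring Z<S> on a set S of generators:
  integer-valued functions on words (lists) of letters from S with finite
  support, added pointwise and multiplied by convolution along concatenation.\<close>

definition free_ring :: "'a set \<Rightarrow> ('a list \<Rightarrow> int) ring" where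
  "free_ring S = \<lparr>carrier = {f. finite {w. f w \<noteq> 0} \<and> (\<forall>w. f w \<noteq> 0 \<longrightarrow> set w \<subseteq> S)},
     monoid.mult = (\<lambda>f g w. \<Sum>i\<le>length w. f (take i w) * g (drop i w)),
     monoid.one = (\<lambda>w. if w = [] then 1 else 0),
     ring.zero = (\<lambda>w. 0),
     ring.add = (\<lambda>f g w. f w + g w), \<dots> = ()\<rparr>"

definition Mat_Z :: "nat \<Rightarrow> int mat ring" where
  "Mat_Z n = ring_mat TYPE(int) n ()"

end

theory Submission
  imports Defs "HOL-Library.Numeral_Type"
begin

text \<open>Reduce modulo a finite ring \<open>F\<close> and count derivations. The matrix ring \<open>M = Mat\<^sub>n(F)\<close> is a
  bimodule over \<open>\<int>\<langle>S\<rangle>\<close> through \<open>\<int>\<langle>S\<rangle> \<rightarrow> Mat\<^sub>n(\<int>) \<rightarrow> Mat\<^sub>n(F)\<close>, and every family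
  \<open>X \<in> M\<^sup>S\<close> extends to a derivation \<open>D\<^sub>X\<close> of \<open>\<int>\<langle>S\<rangle>\<close> into \<open>M\<close>, additively in \<open>X\<close>. If \<open>D\<^sub>X\<close>
  kills the relations it kills the ideal they generate, so it descends to a derivation
  \<open>Mat\<^sub>n(\<int>) \<rightarrow> Mat\<^sub>n(F)\<close>. Such derivations are inner, \<open>X\<^sub>s = [s, Y]\<close> with \<open>Y\<^sub>0\<^sub>0 = 0\<close>,
  so fewer than \<open>|M|\<close> families kill all relations. The fibres of the map sending \<open>X\<close> to the
  values \<open>D\<^sub>X r\<close> on the relations are translates of this kernel, whence \<open>|M|\<^bsup>|S|\<^esup> < |M|\<^bsup>|Rel| + 1\<^esup>\<close>.\<close>

lemma index_mult_mat_sum: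
  assumes "A \<in> carrier_mat nr k" "B \<in> carrier_mat k nc" "i < nr" "j < nc"
  shows "(A * B) $$ (i, j) = (\<Sum>r<k. A $$ (i, r) * B $$ (r, j))"
  using assms by (simp add: scalar_prod_def atLeast0LessThan)

lemma smult_one_mat [simp]: "(1::'b::monoid_mult) \<cdot>\<^sub>m A = A"
  by (rule eq_matI) simp_all

lemma mat_add_right_cancel:
  fixes A B C :: "'b::ab_group_add mat"
  assumes "A \<in> carrier_mat nr nc" "B \<in> carrier_mat nr nc" "C \<in> carrier_mat nr nc" "A + C = B + C"
  shows "A = B"
proof (rule eq_matI)
  fix i j assume "i < dim_row B" "j < dim_col B"
  then have ij: "i < nr" "j < nc" using assms(2) by auto
  have "(A + C) $$ (i, j) = (B + C) $$ (i, j)" using assms(4) by simp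
  then show "A $$ (i, j) = B $$ (i, j)" using assms(1-3) ij by simp
qed (use assms in simp_all)

lemma mat_diff_add_cancel:
  fixes A B :: "'b::ab_group_add mat"
  shows "A \<in> carrier_mat nr nc \<Longrightarrow> B \<in> carrier_mat nr nc \<Longrightarrow> A - B + B = A"
  by (rule eq_matI) simp_all

lemma finite_carrier_mat: "finite (carrier_mat nr nc :: 'b::finite mat set)"
proof (rule finite_subset)
  show "carrier_mat nr nc \<subseteq> (\<lambda>f. mat nr nc f) ` ({0..<nr} \<times> {0..<nc} \<rightarrow>\<^sub>E (UNIV :: 'b set))"
  proof
    fix A :: "'b mat" assume A: "A \<in> carrier_mat nr nc"
    then have "A = mat nr nc (restrict (\<lambda>ij. A $$ ij) ({0..<nr} \<times> {0..<nc}))"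
      by (intro eq_matI) auto
    then show "A \<in> (\<lambda>f. mat nr nc f) ` ({0..<nr} \<times> {0..<nc} \<rightarrow>\<^sub>E UNIV)" by fastforce
  qed
qed (simp add: finite_PiE)

lemma card_le_card_image_mult:
  assumes "finite A" and "\<And>y. y \<in> f ` A \<Longrightarrow> card {x \<in> A. f x = y} \<le> k"
  shows "card A \<le> card (f ` A) * k"
proof -
  have "card A = card (\<Union>y\<in>f ` A. {x \<in> A. f x = y})" by (rule arg_cong[of _ _ card]) blast
  also have "\<dots> \<le> (\<Sum>y\<in>f ` A. card {x \<in> A. f x = y})" by (rule card_UN_le) (use assms in simp)
  also have "\<dots> \<le> (\<Sum>y\<in>f ` A. k)" by (rule sum_mono) (rule assms(2))
  finally show ?thesis by simp
qed

definition mat_unit :: "nat \<Rightarrow> nat \<Rightarrow> nat \<Rightarrow> 'b::{zero,one} mat" where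
  "mat_unit n p q = mat n n (\<lambda>(i, j). if i = p \<and> j = q then 1 else 0)"

lemma mat_unit_carrier [simp]: "mat_unit n p q \<in> carrier_mat n n"
  and dim_mat_unit [simp]: "dim_row (mat_unit n p q) = n" "dim_col (mat_unit n p q) = n"
  by (simp_all add: mat_unit_def)

lemma map_mat_of_int_mat_unit [simp]:
  "map_mat of_int (mat_unit n p q) = (mat_unit n p q :: 'b::ring_1 mat)"
  by (rule eq_matI) (auto simp: mat_unit_def)

lemma index_mult_mat_unit:
  fixes A :: "'b::semiring_1 mat"
  assumes "A \<in> carrier_mat n n" "i < n" "j < n" "p < n"
  shows "(A * mat_unit n p q) $$ (i, j) = (if j = q then A $$ (i, p) else 0)"
proof -
  have "(A * mat_unit n p q) $$ (i, j) = (\<Sum>r<n. A $$ (i, r) * mat_unit n p q $$ (r, j))"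
    using assms by (intro index_mult_mat_sum) auto
  also have "\<dots> = (\<Sum>r<n. if r = p then (if j = q then A $$ (i, r) else 0) else 0)"
    using assms by (intro sum.cong) (auto simp: mat_unit_def)
  finally show ?thesis using assms(4) by simp
qed

lemma index_mat_unit_mult:
  fixes A :: "'b::semiring_1 mat"
  assumes "A \<in> carrier_mat n n" "i < n" "j < n" "q < n"
  shows "(mat_unit n p q * A) $$ (i, j) = (if i = p then A $$ (q, j) else 0)"
proof -
  have "(mat_unit n p q * A) $$ (i, j) = (\<Sum>r<n. mat_unit n p q $$ (i, r) * A $$ (r, j))"
    using assms by (intro index_mult_mat_sum) auto
  also have "\<dots> = (\<Sum>r<n. if r = q then (if i = p then A $$ (r, j) else 0) else 0)"
    using assms by (intro sum.cong) (auto simp: mat_unit_def)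
  finally show ?thesis using assms(4) by simp
qed

lemma mat_unit_mult_mult_mat_unit:
  fixes A :: "'b::semiring_1 mat"
  assumes A: "A \<in> carrier_mat n n" and "k < n" "p < n" "q < n" "l < n"
  shows "mat_unit n k p * (A * mat_unit n q l) = A $$ (p, q) \<cdot>\<^sub>m mat_unit n k l"
proof (rule eq_matI)
  fix i j assume "i < dim_row (A $$ (p, q) \<cdot>\<^sub>m mat_unit n k l :: 'b mat)"
    "j < dim_col (A $$ (p, q) \<cdot>\<^sub>m mat_unit n k l :: 'b mat)"
  then have ij: "i < n" "j < n" by simp_all
  have "A * mat_unit n q l \<in> carrier_mat n n" using A by simp
  then show "(mat_unit n k p * (A * mat_unit n q l)) $$ (i, j) = (A $$ (p, q) \<cdot>\<^sub>m mat_unit n k l) $$ (i, j)"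
    using assms ij by (simp del: index_mult_mat(1) add: index_mat_unit_mult index_mult_mat_unit)
      (simp add: mat_unit_def)
qed simp_all

lemma mat_unit_mult_mat_unit:
  assumes "k < n" "p < n" "q < n" "l < n"
  shows "mat_unit n k p * mat_unit n q l = (if p = q then 1 else 0) \<cdot>\<^sub>m (mat_unit n k l :: 'b::semiring_1 mat)"
  using mat_unit_mult_mult_mat_unit[of "1\<^sub>m n" n k p q l] assms by simp

locale int_mat_derivation =
  fixes n :: nat and d :: "int mat \<Rightarrow> 'b::comm_ring_1 mat"
  assumes n_pos: "0 < n"
    and carrier: "\<And>m. m \<in> carrier_mat n n \<Longrightarrow> d m \<in> carrier_mat n n"
    and add: "\<And>m m'. m \<in> carrier_mat n n \<Longrightarrow> m' \<in> carrier_mat n n \<Longrightarrow> d (m + m') = d m + d m'"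
    and leibniz: "\<And>m m'. m \<in> carrier_mat n n \<Longrightarrow> m' \<in> carrier_mat n n \<Longrightarrow>
      d (m * m') = d m * map_mat of_int m' + map_mat of_int m * d m'"
begin

lemma corner_mat_unit: "d (mat_unit n 0 0) $$ (0, 0) = 0"
proof -
  let ?E = "mat_unit n 0 0 :: int mat"
  have "?E * ?E = ?E" using mat_unit_mult_mat_unit[of 0 n 0 0 0] n_pos by simp
  then have "d ?E = d ?E * map_mat of_int ?E + map_mat of_int ?E * d ?E"
    using leibniz[of ?E ?E] by simp
  then have "d ?E $$ (0, 0) = (d ?E * map_mat of_int ?E + map_mat of_int ?E * d ?E) $$ (0, 0)"
    by simp
  also have "\<dots> = d ?E $$ (0, 0) + d ?E $$ (0, 0)"
    using carrier[of ?E] n_pos by (simp del: index_mult_mat(1) add: index_mult_mat_unit index_mat_unit_mult)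
  finally show ?thesis by simp
qed

lemma corner_smult_mat_unit: "d (c \<cdot>\<^sub>m mat_unit n 0 0) $$ (0, 0) = 0"
proof -
  let ?f = "\<lambda>c. d (c \<cdot>\<^sub>m mat_unit n 0 0) $$ (0, 0)"
  have f_add: "?f (a + b) = ?f a + ?f b" for a b
    using add[of "a \<cdot>\<^sub>m mat_unit n 0 0" "b \<cdot>\<^sub>m mat_unit n 0 0"]
      carrier[of "a \<cdot>\<^sub>m mat_unit n 0 0"] carrier[of "b \<cdot>\<^sub>m mat_unit n 0 0"] n_pos
    by (simp add: add_smult_distrib_right_mat[of _ n n])
  show ?thesis
  proof (induction c rule: int_induct[where k = 0])
    case base
    from f_add[of 0 0] show ?case by simp
  next
    case (step1 c)
    with f_add[of c 1] corner_mat_unit show ?case by simp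
  next
    case (step2 c)
    with f_add[of "c - 1" 1] corner_mat_unit show ?case by simp
  qed
qed

text \<open>Leibniz rule for \<open>E\<^sub>0\<^sub>p (m E\<^sub>q\<^sub>0) = m\<^sub>p\<^sub>q E\<^sub>0\<^sub>0\<close>, read off at the corner.\<close>

lemma index_by_mat_units:
  assumes m: "m \<in> carrier_mat n n" and p: "p < n" and q: "q < n"
  shows "d m $$ (p, q)
    = - (d (mat_unit n 0 p) * map_mat of_int m) $$ (0, q) - (map_mat of_int m * d (mat_unit n q 0)) $$ (p, 0)"
proof -
  let ?E0p = "mat_unit n 0 p :: int mat" and ?Eq0 = "mat_unit n q 0 :: int mat"
  have mE: "m * ?Eq0 \<in> carrier_mat n n" using m by simp
  have dE0p: "d ?E0p \<in> carrier_mat n n" using carrier by simp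
  have "d ?E0p * map_mat of_int (m * ?Eq0) = d ?E0p * (map_mat of_int m * mat_unit n q 0)"
    by (simp only: of_int_hom.mat_hom_mult[OF m mat_unit_carrier] map_mat_of_int_mat_unit)
  also have "\<dots> = (d ?E0p * map_mat of_int m) * mat_unit n q 0"
    using dE0p m by (simp add: assoc_mult_mat[of _ n n _ n _ n])
  finally have assoc: "d ?E0p * map_mat of_int (m * ?Eq0) = (d ?E0p * map_mat of_int m) * mat_unit n q 0" .
  have "0 = d (?E0p * (m * ?Eq0)) $$ (0, 0)"
    using mat_unit_mult_mult_mat_unit[OF m n_pos p q n_pos] corner_smult_mat_unit by simp
  also have "\<dots> = (d ?E0p * map_mat of_int m) $$ (0, q) + d (m * ?Eq0) $$ (p, 0)"
    using leibniz[OF _ mE] carrier[OF mE] dE0p m n_pos p q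
    by (simp del: index_mult_mat(1) add: assoc index_mult_mat_unit index_mat_unit_mult)
  also have "d (m * ?Eq0) $$ (p, 0) = d m $$ (p, q) + (map_mat of_int m * d ?Eq0) $$ (p, 0)"
    using leibniz[OF m] carrier[OF m] carrier[of ?Eq0] m n_pos p q
    by (simp del: index_mult_mat(1) add: index_mult_mat_unit)
  finally show ?thesis by (simp add: algebra_simps eq_neg_iff_add_eq_0)
qed

lemma index_mat_unit_swap:
  assumes r: "r < n" and q: "q < n"
  shows "d (mat_unit n q 0) $$ (r, 0) = - d (mat_unit n 0 r) $$ (0, q)"
proof -
  let ?E0r = "mat_unit n 0 r :: int mat" and ?Eq0 = "mat_unit n q 0 :: int mat"
  have "?E0r * ?Eq0 = (if r = q then 1 else 0) \<cdot>\<^sub>m mat_unit n 0 0"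
    using mat_unit_mult_mat_unit n_pos r q by blast
  then have "0 = d (?E0r * ?Eq0) $$ (0, 0)"
    by (simp only: corner_smult_mat_unit)
  also have "\<dots> = d ?E0r $$ (0, q) + d ?Eq0 $$ (r, 0)"
    using leibniz[of ?E0r ?Eq0] carrier[of ?E0r] carrier[of ?Eq0] n_pos r q
    by (simp del: index_mult_mat(1) add: index_mult_mat_unit index_mat_unit_mult)
  finally show ?thesis by (simp add: algebra_simps eq_neg_iff_add_eq_0)
qed

definition inner_mat :: "'b mat" where
  "inner_mat = mat n n (\<lambda>(p, q). d (mat_unit n 0 p) $$ (0, q))"

lemma inner_mat_carrier: "inner_mat \<in> carrier_mat n n"
  by (simp add: inner_mat_def)

lemma inner:
  assumes m: "m \<in> carrier_mat n n"
  shows "d m = map_mat of_int m * inner_mat - inner_mat * map_mat of_int m"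
proof (rule eq_matI)
  let ?m = "map_mat of_int m :: 'b mat"
  have mb: "?m \<in> carrier_mat n n" using m by simp
  fix p q assume "p < dim_row (?m * inner_mat - inner_mat * ?m)" "q < dim_col (?m * inner_mat - inner_mat * ?m)"
  then have p: "p < n" and q: "q < n" using m by (simp_all add: inner_mat_def)
  have "(d (mat_unit n 0 p) * ?m) $$ (0, q) = (\<Sum>r<n. d (mat_unit n 0 p) $$ (0, r) * ?m $$ (r, q))"
    using carrier[of "mat_unit n 0 p"] mb n_pos q by (intro index_mult_mat_sum) auto
  also have "\<dots> = (\<Sum>r<n. inner_mat $$ (p, r) * ?m $$ (r, q))"
    using p by (intro sum.cong) (simp_all add: inner_mat_def)
  also have "\<dots> = (inner_mat * ?m) $$ (p, q)"
    using inner_mat_carrier mb p q by (intro index_mult_mat_sum[symmetric]) auto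
  finally have left: "(d (mat_unit n 0 p) * ?m) $$ (0, q) = (inner_mat * ?m) $$ (p, q)" .
  have "(?m * d (mat_unit n q 0)) $$ (p, 0) = (\<Sum>r<n. ?m $$ (p, r) * d (mat_unit n q 0) $$ (r, 0))"
    using carrier[of "mat_unit n q 0"] mb n_pos p by (intro index_mult_mat_sum) auto
  also have "\<dots> = (\<Sum>r<n. - (?m $$ (p, r) * inner_mat $$ (r, q)))"
    using q by (intro sum.cong) (simp_all add: inner_mat_def index_mat_unit_swap)
  also have "\<dots> = - (?m * inner_mat) $$ (p, q)"
    using index_mult_mat_sum[OF mb inner_mat_carrier p q] by (simp add: sum_negf)
  finally have right: "(?m * d (mat_unit n q 0)) $$ (p, 0) = - (?m * inner_mat) $$ (p, q)" .
  show "d m $$ (p, q) = (?m * inner_mat - inner_mat * ?m) $$ (p, q)"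
    using index_by_mat_units[OF m p q] left right mb inner_mat_carrier p q by simp
qed (use m carrier[OF m] in \<open>simp_all add: inner_mat_def\<close>)

lemma inner_derivation:
  "\<exists>Y \<in> carrier_mat n n. Y $$ (0, 0) = 0 \<and>
     (\<forall>m \<in> carrier_mat n n. d m = map_mat of_int m * Y - Y * map_mat of_int m)"
proof (intro bexI conjI ballI)
  show "inner_mat $$ (0, 0) = 0" using corner_mat_unit n_pos by (simp add: inner_mat_def)
qed (simp_all add: inner inner_mat_carrier)

end

lemma free_ring_simps:
  "carrier (free_ring S) = {f. finite {w. f w \<noteq> 0} \<and> (\<forall>w. f w \<noteq> 0 \<longrightarrow> set w \<subseteq> S)}"
  "f \<oplus>\<^bsub>free_ring S\<^esub> g = (\<lambda>w. f w + g w)"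
  "f \<otimes>\<^bsub>free_ring S\<^esub> g = (\<lambda>w. \<Sum>i\<le>length w. f (take i w) * g (drop i w))"
  "\<zero>\<^bsub>free_ring S\<^esub> = (\<lambda>w. 0)"
  "\<one>\<^bsub>free_ring S\<^esub> = (\<lambda>w. if w = [] then 1 else 0)"
  by (simp_all add: free_ring_def)

definition free_monom :: "'a list \<Rightarrow> 'a list \<Rightarrow> int" where
  "free_monom w = (\<lambda>x. if x = w then 1 else 0)"

lemma scaled_free_monom_carrier:
  "set w \<subseteq> S \<Longrightarrow> (\<lambda>x. c * free_monom w x) \<in> carrier (free_ring S)"
proof -
  assume "set w \<subseteq> S"
  moreover have "{x. c * free_monom w x \<noteq> 0} \<subseteq> {w}" by (auto simp: free_monom_def)
  ultimately show ?thesis by (auto simp: free_ring_simps free_monom_def intro: finite_subset)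
qed

lemma free_monom_carrier: "set w \<subseteq> S \<Longrightarrow> free_monom w \<in> carrier (free_ring S)"
  using scaled_free_monom_carrier[of w S 1] by simp

lemma one_free_ring: "\<one>\<^bsub>free_ring S\<^esub> = free_monom []"
  by (auto simp: free_ring_simps free_monom_def)

lemma free_monom_mult: "free_monom u \<otimes>\<^bsub>free_ring S\<^esub> free_monom v = free_monom (u @ v)"
proof
  fix x :: "'a list"
  have "free_monom u (take i x) * free_monom v (drop i x) = (if i = length u \<and> x = u @ v then 1 else 0)"
    if "i \<le> length x" for i
    using that by (auto simp: free_monom_def)
  then have "(\<Sum>i\<le>length x. free_monom u (take i x) * free_monom v (drop i x))
      = (\<Sum>i\<le>length x. if i = length u \<and> x = u @ v then 1 else 0)"
    by (intro sum.cong) auto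
  also have "\<dots> = free_monom (u @ v) x"
    by (auto simp: free_monom_def)
  finally show "(free_monom u \<otimes>\<^bsub>free_ring S\<^esub> free_monom v) x = free_monom (u @ v) x"
    by (simp add: free_ring_simps)
qed

lemma additive_vanishes_on_scaled_free_monom:
  fixes Phi :: "('a list \<Rightarrow> int) \<Rightarrow> 'b::ab_group_add"
  assumes add: "\<And>f g. f \<in> carrier (free_ring S) \<Longrightarrow> g \<in> carrier (free_ring S) \<Longrightarrow>
      Phi (\<lambda>w. f w + g w) = Phi f + Phi g"
    and monom: "Phi (free_monom w) = 0" and w: "set w \<subseteq> S"
  shows "Phi (\<lambda>x. c * free_monom w x) = 0"
proof (induction c rule: int_induct[where k = 0])
  case base
  have "(\<lambda>x::'a list. 0::int) \<in> carrier (free_ring S)" by (simp add: free_ring_simps)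
  from add[OF this this] show ?case by simp
next
  case (step1 c)
  have "(\<lambda>x. (c + 1) * free_monom w x) = (\<lambda>x. c * free_monom w x + free_monom w x)"
    by (simp add: algebra_simps)
  with add[OF scaled_free_monom_carrier[OF w] free_monom_carrier[OF w]] step1 monom
  show ?case by simp
next
  case (step2 c)
  have "(\<lambda>x. c * free_monom w x) = (\<lambda>x. (c - 1) * free_monom w x + free_monom w x)"
    by (simp add: algebra_simps)
  with add[OF scaled_free_monom_carrier[OF w] free_monom_carrier[OF w]] step2 monom
  show ?case by simp
qed

lemma free_ring_additive_vanishes:
  fixes Phi :: "('a list \<Rightarrow> int) \<Rightarrow> 'b::ab_group_add"
  assumes add: "\<And>f g. f \<in> carrier (free_ring S) \<Longrightarrow> g \<in> carrier (free_ring S) \<Longrightarrow>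
      Phi (\<lambda>w. f w + g w) = Phi f + Phi g"
    and monom: "\<And>w. set w \<subseteq> S \<Longrightarrow> Phi (free_monom w) = 0"
    and f: "f \<in> carrier (free_ring S)"
  shows "Phi f = 0"
proof -
  have scaled: "Phi (\<lambda>x. c * free_monom w x) = 0" if "set w \<subseteq> S" for c w
    using additive_vanishes_on_scaled_free_monom[of S Phi w c] add monom that by blast
  have "\<forall>f \<in> carrier (free_ring S). {w. f w \<noteq> 0} \<subseteq> T \<longrightarrow> Phi f = 0" if "finite T" for T
    using that
  proof (induction T)
    case empty
    have "(\<lambda>w. 0) = (\<lambda>x. 0 * free_monom [] x)" by simp
    then show ?case using scaled[of "[]" 0] by auto
  next
    case (insert v T)
    show ?case
    proof (intro ballI impI)
      fix f assume f: "f \<in> carrier (free_ring S)" and supp: "{w. f w \<noteq> 0} \<subseteq> insert v T"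
      show "Phi f = 0"
      proof (cases "f v = 0")
        case True
        with supp insert.IH f show ?thesis by auto
      next
        case False
        with f have v: "set v \<subseteq> S" by (simp add: free_ring_simps)
        have g: "f(v := 0) \<in> carrier (free_ring S)"
          using f by (auto simp: free_ring_simps intro: finite_subset[of _ "{w. f w \<noteq> 0}"])
        have "{w. (f(v := 0)) w \<noteq> 0} \<subseteq> T"
          using supp insert.hyps(2) by auto
        with insert.IH g have "Phi (f(v := 0)) = 0" by blast
        moreover have "f = (\<lambda>x. (f(v := 0)) x + f v * free_monom v x)"
          by (auto simp: free_monom_def)
        then have "Phi f = Phi (f(v := 0)) + Phi (\<lambda>x. f v * free_monom v x)"
          using add[OF g scaled_free_monom_carrier[OF v]] by metis
        ultimately show ?thesis using scaled[OF v] by simp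
      qed
    qed
  qed
  then show ?thesis using f by (auto simp: free_ring_simps)
qed

lemma free_ring_additive_eq:
  fixes Phi Psi :: "('a list \<Rightarrow> int) \<Rightarrow> 'b::ab_group_add"
  assumes Phi_add: "\<And>f g. f \<in> carrier (free_ring S) \<Longrightarrow> g \<in> carrier (free_ring S) \<Longrightarrow>
      Phi (\<lambda>w. f w + g w) = Phi f + Phi g"
    and Psi_add: "\<And>f g. f \<in> carrier (free_ring S) \<Longrightarrow> g \<in> carrier (free_ring S) \<Longrightarrow>
      Psi (\<lambda>w. f w + g w) = Psi f + Psi g"
    and monom: "\<And>w. set w \<subseteq> S \<Longrightarrow> Phi (free_monom w) = Psi (free_monom w)"
    and f: "f \<in> carrier (free_ring S)"
  shows "Phi f = Psi f"
proof -
  have "(\<lambda>f. Phi f - Psi f) f = 0"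
  proof (rule free_ring_additive_vanishes[OF _ _ f])
    fix f g assume "f \<in> carrier (free_ring S)" "g \<in> carrier (free_ring S)"
    then show "Phi (\<lambda>w. f w + g w) - Psi (\<lambda>w. f w + g w) = (Phi f - Psi f) + (Phi g - Psi g)"
      using Phi_add Psi_add by simp
  qed (simp add: monom)
  then show ?thesis by simp
qed

primrec word_deriv :: "('a list \<Rightarrow> 'b::comm_ring_1 mat) \<Rightarrow> nat \<Rightarrow> ('a \<Rightarrow> 'b mat) \<Rightarrow> 'a list \<Rightarrow> 'b mat" where
  "word_deriv P n X [] = 0\<^sub>m n n"
| "word_deriv P n X (a # w) = X a * P w + P [a] * word_deriv P n X w"

definition free_deriv ::
  "('a list \<Rightarrow> 'b::comm_ring_1 mat) \<Rightarrow> nat \<Rightarrow> ('a \<Rightarrow> 'b mat) \<Rightarrow> ('a list \<Rightarrow> int) \<Rightarrow> 'b mat" where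
  "free_deriv P n X f = mat n n (\<lambda>(i, j). \<Sum>w | f w \<noteq> 0. of_int (f w) * word_deriv P n X w $$ (i, j))"

lemma free_deriv_carrier [simp]: "free_deriv P n X f \<in> carrier_mat n n"
  and dim_free_deriv [simp]: "dim_row (free_deriv P n X f) = n" "dim_col (free_deriv P n X f) = n"
  by (simp_all add: free_deriv_def)

lemma index_free_deriv:
  assumes "finite T" "{w. f w \<noteq> 0} \<subseteq> T" "i < n" "j < n"
  shows "free_deriv P n X f $$ (i, j) = (\<Sum>w\<in>T. of_int (f w) * word_deriv P n X w $$ (i, j))"
  using assms by (simp add: free_deriv_def) (intro sum.mono_neutral_left, auto)

lemma free_deriv_add:
  assumes "finite {w. f w \<noteq> 0}" "finite {w. g w \<noteq> 0}"
  shows "free_deriv P n X (\<lambda>w. f w + g w) = free_deriv P n X f + free_deriv P n X g"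
proof (rule eq_matI)
  fix i j assume "i < dim_row (free_deriv P n X f + free_deriv P n X g)"
    "j < dim_col (free_deriv P n X f + free_deriv P n X g)"
  then have ij: "i < n" "j < n" by simp_all
  let ?T = "{w. f w \<noteq> 0} \<union> {w. g w \<noteq> 0}"
  have T: "finite ?T" using assms by simp
  have "{w. f w + g w \<noteq> 0} \<subseteq> ?T" "{w. f w \<noteq> 0} \<subseteq> ?T" "{w. g w \<noteq> 0} \<subseteq> ?T"
    by auto
  then show "free_deriv P n X (\<lambda>w. f w + g w) $$ (i, j) = (free_deriv P n X f + free_deriv P n X g) $$ (i, j)"
    using ij by (simp add: index_free_deriv[OF T] sum.distrib distrib_right)
qed simp_all

lemma free_deriv_uminus: "free_deriv P n X (\<lambda>w. - f w) = - free_deriv P n X f"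
  by (rule eq_matI) (simp_all add: free_deriv_def sum_negf)

lemma word_deriv_cong: "(\<And>a. a \<in> set w \<Longrightarrow> X a = X' a) \<Longrightarrow> word_deriv P n X w = word_deriv P n X' w"
  by (induction w) auto

lemma free_deriv_cong:
  assumes "\<And>w a. f w \<noteq> 0 \<Longrightarrow> a \<in> set w \<Longrightarrow> X a = X' a"
  shows "free_deriv P n X f = free_deriv P n X' f"
  unfolding free_deriv_def using word_deriv_cong[of _ X X'] assms
  by (intro cong[of "mat n n", OF refl] ext) (auto intro!: sum.cong)

lemma free_ring_additive_mat_eq:
  fixes Phi Psi :: "('a list \<Rightarrow> int) \<Rightarrow> 'b::ab_group_add mat"
  assumes Phi_add: "\<And>f g. f \<in> carrier (free_ring S) \<Longrightarrow> g \<in> carrier (free_ring S) \<Longrightarrow>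
      Phi (\<lambda>w. f w + g w) = Phi f + Phi g"
    and Psi_add: "\<And>f g. f \<in> carrier (free_ring S) \<Longrightarrow> g \<in> carrier (free_ring S) \<Longrightarrow>
      Psi (\<lambda>w. f w + g w) = Psi f + Psi g"
    and Phi_carrier: "\<And>f. f \<in> carrier (free_ring S) \<Longrightarrow> Phi f \<in> carrier_mat n n"
    and Psi_carrier: "\<And>f. f \<in> carrier (free_ring S) \<Longrightarrow> Psi f \<in> carrier_mat n n"
    and monom: "\<And>w. set w \<subseteq> S \<Longrightarrow> Phi (free_monom w) = Psi (free_monom w)"
    and f: "f \<in> carrier (free_ring S)"
  shows "Phi f = Psi f"
proof (rule eq_matI)
  fix i j assume "i < dim_row (Psi f)" "j < dim_col (Psi f)"
  then have ij: "i < n" "j < n" using Psi_carrier[OF f] by auto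
  show "Phi f $$ (i, j) = Psi f $$ (i, j)"
  proof (rule free_ring_additive_eq[where Phi = "\<lambda>f. Phi f $$ (i, j)" and Psi = "\<lambda>f. Psi f $$ (i, j)"])
    fix f g assume fg: "f \<in> carrier (free_ring S)" "g \<in> carrier (free_ring S)"
    show "Phi (\<lambda>w. f w + g w) $$ (i, j) = Phi f $$ (i, j) + Phi g $$ (i, j)"
      using Phi_add[OF fg] Phi_carrier[OF fg(1)] Phi_carrier[OF fg(2)] ij by simp
    show "Psi (\<lambda>w. f w + g w) $$ (i, j) = Psi f $$ (i, j) + Psi g $$ (i, j)"
      using Psi_add[OF fg] Psi_carrier[OF fg(1)] Psi_carrier[OF fg(2)] ij by simp
  qed (use monom f in auto)
qed (use Phi_carrier[OF f] Psi_carrier[OF f] in auto)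

locale free_ring_mat_rep =
  fixes S :: "'a set" and n :: nat and rho :: "('a list \<Rightarrow> int) \<Rightarrow> 'b::comm_ring_1 mat"
  assumes ring_free_ring: "ring (free_ring S)"
    and rho_hom: "rho \<in> Ring.ring_hom (free_ring S) (ring_mat TYPE('b) n ())"
begin

abbreviation P :: "'a list \<Rightarrow> 'b mat" where
  "P w \<equiv> rho (free_monom w)"

lemma rho_carrier: "f \<in> carrier (free_ring S) \<Longrightarrow> rho f \<in> carrier_mat n n"
  and rho_add: "f \<in> carrier (free_ring S) \<Longrightarrow> g \<in> carrier (free_ring S) \<Longrightarrow>
    rho (\<lambda>w. f w + g w) = rho f + rho g"
  and rho_mult: "f \<in> carrier (free_ring S) \<Longrightarrow> g \<in> carrier (free_ring S) \<Longrightarrow>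
    rho (f \<otimes>\<^bsub>free_ring S\<^esub> g) = rho f * rho g"
  and rho_zero: "rho (\<lambda>w. 0) = 0\<^sub>m n n"
  and P_Nil: "P [] = 1\<^sub>m n"
proof -
  interpret ring_hom_ring "free_ring S" "ring_mat TYPE('b) n ()" rho
    using ring_free_ring ring_mat rho_hom by (intro ring_hom_ringI2) auto
  show "rho (\<lambda>w. 0) = 0\<^sub>m n n" using hom_zero by (simp add: ring_mat_simps free_ring_simps)
qed (use rho_hom in \<open>auto simp: Ring.ring_hom_def ring_mat_simps free_ring_simps(2) one_free_ring\<close>)

lemma P_carrier: "set w \<subseteq> S \<Longrightarrow> P w \<in> carrier_mat n n"
  by (simp add: rho_carrier free_monom_carrier)

lemma P_append: "set u \<subseteq> S \<Longrightarrow> set v \<subseteq> S \<Longrightarrow> P (u @ v) = P u * P v"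
  by (metis free_monom_mult rho_mult free_monom_carrier)

lemma rho_uminus:
  assumes f: "f \<in> carrier (free_ring S)"
  shows "rho (\<lambda>w. - f w) = - rho f"
proof -
  have minus_f: "(\<lambda>w. - f w) \<in> carrier (free_ring S)" using f by (simp add: free_ring_simps)
  have sum: "rho f + rho (\<lambda>w. - f w) = 0\<^sub>m n n"
    using rho_add[OF f minus_f] rho_zero by simp
  show ?thesis
  proof (rule eq_matI)
    fix i j assume "i < dim_row (- rho f)" "j < dim_col (- rho f)"
    then have ij: "i < n" "j < n" using rho_carrier[OF f] by auto
    have "(rho f + rho (\<lambda>w. - f w)) $$ (i, j) = 0" using sum ij by simp
    then show "rho (\<lambda>w. - f w) $$ (i, j) = (- rho f) $$ (i, j)"
      using rho_carrier[OF f] rho_carrier[OF minus_f] ij by (simp add: eq_neg_iff_add_eq_0 add.commute)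
  qed (use rho_carrier[OF f] rho_carrier[OF minus_f] in auto)
qed

lemma word_deriv_carrier:
  "X \<in> S \<rightarrow> carrier_mat n n \<Longrightarrow> set w \<subseteq> S \<Longrightarrow> word_deriv P n X w \<in> carrier_mat n n"
  by (induction w) (auto intro!: P_carrier add_carrier_mat mult_carrier_mat)

lemma word_deriv_append:
  assumes X: "X \<in> S \<rightarrow> carrier_mat n n" and u: "set u \<subseteq> S" and v: "set v \<subseteq> S"
  shows "word_deriv P n X (u @ v) = word_deriv P n X u * P v + P u * word_deriv P n X v"
  using u
proof (induction u)
  case Nil
  then show ?case using word_deriv_carrier[OF X v] P_carrier[OF v] by (simp add: P_Nil)
next
  case (Cons a u)
  then have a: "a \<in> S" and u: "set u \<subseteq> S" by auto
  have Xa: "X a \<in> carrier_mat n n" using X a by auto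
  have Pa: "P [a] \<in> carrier_mat n n" and Pu: "P u \<in> carrier_mat n n" and Pv: "P v \<in> carrier_mat n n"
    using a u v by (auto intro!: P_carrier)
  have Du: "word_deriv P n X u \<in> carrier_mat n n" and Dv: "word_deriv P n X v \<in> carrier_mat n n"
    using word_deriv_carrier[OF X] u v by auto
  have "word_deriv P n X ((a # u) @ v)
      = X a * (P u * P v) + P [a] * (word_deriv P n X u * P v + P u * word_deriv P n X v)"
    using Cons.IH[OF u] P_append[OF u v] by simp
  also have "\<dots> = (X a * P u + P [a] * word_deriv P n X u) * P v + (P [a] * P u) * word_deriv P n X v"
    using Xa Pa Pu Pv Du Dv
    by (simp add: mult_add_distrib_mat[of _ n n _ n] add_mult_distrib_mat[of _ n n _ _ n]
        assoc_add_mat[of _ n n])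
  finally show ?case using P_append[of "[a]" u] a u by simp
qed

lemma word_deriv_add_family:
  assumes X: "X \<in> S \<rightarrow> carrier_mat n n" and X': "X' \<in> S \<rightarrow> carrier_mat n n" and w: "set w \<subseteq> S"
  shows "word_deriv P n (\<lambda>a. X a + X' a) w = word_deriv P n X w + word_deriv P n X' w"
  using w
proof (induction w)
  case (Cons a w)
  then have a: "a \<in> S" and w: "set w \<subseteq> S" by auto
  have "X a \<in> carrier_mat n n" "X' a \<in> carrier_mat n n" "P [a] \<in> carrier_mat n n" "P w \<in> carrier_mat n n"
    "word_deriv P n X w \<in> carrier_mat n n" "word_deriv P n X' w \<in> carrier_mat n n"
    using X X' a w by (auto intro!: P_carrier word_deriv_carrier)
  then show ?case using Cons.IH[OF w]
    by (simp add: add_mult_distrib_mat[of _ n n] mult_add_distrib_mat[of _ n n] algebra_simps)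
      (rule eq_matI, auto simp: algebra_simps)
qed simp

lemma free_deriv_add_carrier:
  "f \<in> carrier (free_ring S) \<Longrightarrow> g \<in> carrier (free_ring S) \<Longrightarrow>
    free_deriv P n X (\<lambda>w. f w + g w) = free_deriv P n X f + free_deriv P n X g"
  by (rule free_deriv_add) (simp_all add: free_ring_simps)

lemma free_deriv_free_monom:
  assumes X: "X \<in> S \<rightarrow> carrier_mat n n" and w: "set w \<subseteq> S"
  shows "free_deriv P n X (free_monom w) = word_deriv P n X w"
proof -
  have "{x. free_monom w x \<noteq> 0} = {w}" by (auto simp: free_monom_def)
  then show ?thesis using word_deriv_carrier[OF X w]
    by (intro eq_matI) (auto simp: free_deriv_def free_monom_def)
qed

lemma free_deriv_add_family:
  assumes X: "X \<in> S \<rightarrow> carrier_mat n n" and X': "X' \<in> S \<rightarrow> carrier_mat n n"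
    and f: "f \<in> carrier (free_ring S)"
  shows "free_deriv P n (\<lambda>a. X a + X' a) f = free_deriv P n X f + free_deriv P n X' f"
proof (rule eq_matI)
  fix i j assume "i < dim_row (free_deriv P n X f + free_deriv P n X' f)"
    "j < dim_col (free_deriv P n X f + free_deriv P n X' f)"
  then have ij: "i < n" "j < n" by simp_all
  have "word_deriv P n (\<lambda>a. X a + X' a) w $$ (i, j) = word_deriv P n X w $$ (i, j) + word_deriv P n X' w $$ (i, j)"
    if "f w \<noteq> 0" for w
  proof -
    have w: "set w \<subseteq> S" using f that by (simp add: free_ring_simps)
    show ?thesis using word_deriv_add_family[OF X X' w] word_deriv_carrier[OF X' w] ij by simp
  qed
  then show "free_deriv P n (\<lambda>a. X a + X' a) f $$ (i, j) = (free_deriv P n X f + free_deriv P n X' f) $$ (i, j)"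
    using ij by (simp add: free_deriv_def distrib_left sum.distrib[symmetric])
qed simp_all

lemma free_deriv_mult_free_monom:
  assumes X: "X \<in> S \<rightarrow> carrier_mat n n" and u: "set u \<subseteq> S" and g: "g \<in> carrier (free_ring S)"
  shows "free_deriv P n X (free_monom u \<otimes>\<^bsub>free_ring S\<^esub> g)
    = free_deriv P n X (free_monom u) * rho g + P u * free_deriv P n X g"
proof (rule free_ring_additive_mat_eq[OF _ _ _ _ _ g])
  interpret R: ring "free_ring S" by (rule ring_free_ring)
  have u': "free_monom u \<in> carrier (free_ring S)" using u by (rule free_monom_carrier)
  fix g h assume g: "g \<in> carrier (free_ring S)" and h: "h \<in> carrier (free_ring S)"
  have "free_monom u \<otimes>\<^bsub>free_ring S\<^esub> (\<lambda>w. g w + h w)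
      = (\<lambda>w. (free_monom u \<otimes>\<^bsub>free_ring S\<^esub> g) w + (free_monom u \<otimes>\<^bsub>free_ring S\<^esub> h) w)"
    using R.r_distr[OF g h u'] by (simp add: free_ring_simps)
  then show "free_deriv P n X (free_monom u \<otimes>\<^bsub>free_ring S\<^esub> (\<lambda>w. g w + h w))
      = free_deriv P n X (free_monom u \<otimes>\<^bsub>free_ring S\<^esub> g) + free_deriv P n X (free_monom u \<otimes>\<^bsub>free_ring S\<^esub> h)"
    using u' g h by (simp add: free_deriv_add_carrier)
  show "free_deriv P n X (free_monom u) * rho (\<lambda>w. g w + h w) + P u * free_deriv P n X (\<lambda>w. g w + h w)
      = (free_deriv P n X (free_monom u) * rho g + P u * free_deriv P n X g)
        + (free_deriv P n X (free_monom u) * rho h + P u * free_deriv P n X h)"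
    using rho_carrier[OF g] rho_carrier[OF h] P_carrier[OF u]
    by (simp add: rho_add[OF g h] free_deriv_add_carrier[OF g h] mult_add_distrib_mat[of _ n n _ n])
      (rule eq_matI, simp_all)
next
  fix w assume w: "set w \<subseteq> S"
  show "free_deriv P n X (free_monom u \<otimes>\<^bsub>free_ring S\<^esub> free_monom w)
      = free_deriv P n X (free_monom u) * P w + P u * free_deriv P n X (free_monom w)"
    using u w by (simp add: free_monom_mult free_deriv_free_monom[OF X] word_deriv_append[OF X])
qed (use P_carrier[OF u] rho_carrier in auto)

lemma free_deriv_mult:
  assumes X: "X \<in> S \<rightarrow> carrier_mat n n"
    and f: "f \<in> carrier (free_ring S)" and g: "g \<in> carrier (free_ring S)"
  shows "free_deriv P n X (f \<otimes>\<^bsub>free_ring S\<^esub> g) = free_deriv P n X f * rho g + rho f * free_deriv P n X g"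
proof (rule free_ring_additive_mat_eq[OF _ _ _ _ _ f])
  interpret R: ring "free_ring S" by (rule ring_free_ring)
  fix f h assume f: "f \<in> carrier (free_ring S)" and h: "h \<in> carrier (free_ring S)"
  have "(\<lambda>w. f w + h w) \<otimes>\<^bsub>free_ring S\<^esub> g
      = (\<lambda>w. (f \<otimes>\<^bsub>free_ring S\<^esub> g) w + (h \<otimes>\<^bsub>free_ring S\<^esub> g) w)"
    using R.l_distr[OF f h g] by (simp add: free_ring_simps)
  then show "free_deriv P n X ((\<lambda>w. f w + h w) \<otimes>\<^bsub>free_ring S\<^esub> g)
      = free_deriv P n X (f \<otimes>\<^bsub>free_ring S\<^esub> g) + free_deriv P n X (h \<otimes>\<^bsub>free_ring S\<^esub> g)"
    using f g h by (simp add: free_deriv_add_carrier)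
  show "free_deriv P n X (\<lambda>w. f w + h w) * rho g + rho (\<lambda>w. f w + h w) * free_deriv P n X g
      = (free_deriv P n X f * rho g + rho f * free_deriv P n X g)
        + (free_deriv P n X h * rho g + rho h * free_deriv P n X g)"
    using rho_carrier[OF f] rho_carrier[OF h] rho_carrier[OF g]
    by (simp add: rho_add[OF f h] free_deriv_add_carrier[OF f h] add_mult_distrib_mat[of _ n n _ _ n])
      (rule eq_matI, simp_all)
next
  fix w assume w: "set w \<subseteq> S"
  show "free_deriv P n X (free_monom w \<otimes>\<^bsub>free_ring S\<^esub> g)
      = free_deriv P n X (free_monom w) * rho g + P w * free_deriv P n X g"
    by (rule free_deriv_mult_free_monom[OF X w g])
qed (use rho_carrier[OF g] rho_carrier in \<open>auto intro!: add_carrier_mat mult_carrier_mat\<close>)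

lemma free_deriv_zero: "free_deriv P n X (\<lambda>w. 0) = 0\<^sub>m n n"
  by (rule eq_matI) (simp_all add: free_deriv_def)

lemma a_inv_free_ring: "f \<in> carrier (free_ring S) \<Longrightarrow> \<ominus>\<^bsub>free_ring S\<^esub> f = (\<lambda>w. - f w)"
  by (rule abelian_group.minus_equality[OF ring.is_abelian_group[OF ring_free_ring]])
    (auto simp: free_ring_simps)

lemma ideal_free_deriv_kernel:
  assumes X: "X \<in> S \<rightarrow> carrier_mat n n"
  shows "ideal {f \<in> carrier (free_ring S). rho f = 0\<^sub>m n n \<and> free_deriv P n X f = 0\<^sub>m n n} (free_ring S)"
    (is "ideal ?I _")
proof (rule idealI[OF ring_free_ring])
  interpret R: ring "free_ring S" by (rule ring_free_ring)
  show "subgroup ?I (add_monoid (free_ring S))"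
  proof
    fix f g assume "f \<in> ?I" "g \<in> ?I"
    then show "f \<otimes>\<^bsub>add_monoid (free_ring S)\<^esub> g \<in> ?I"
      using R.a_closed[of f g] by (simp add: free_ring_simps rho_add free_deriv_add_carrier)
  next
    fix f assume f: "f \<in> ?I"
    have "inv\<^bsub>add_monoid (free_ring S)\<^esub> f = \<ominus>\<^bsub>free_ring S\<^esub> f" by (simp add: a_inv_def)
    then show "inv\<^bsub>add_monoid (free_ring S)\<^esub> f \<in> ?I"
      using f R.a_inv_closed[of f] by (simp add: a_inv_free_ring rho_uminus free_deriv_uminus)
        (rule eq_matI, simp_all)
  qed (auto simp: free_ring_simps rho_zero free_deriv_zero)
next
  interpret R: ring "free_ring S" by (rule ring_free_ring)
  fix f g assume "f \<in> ?I" and g: "g \<in> carrier (free_ring S)"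
  then show "g \<otimes>\<^bsub>free_ring S\<^esub> f \<in> ?I" and "f \<otimes>\<^bsub>free_ring S\<^esub> g \<in> ?I"
    using rho_carrier[OF g] by (auto simp: rho_mult free_deriv_mult[OF X])
qed

lemma free_deriv_vanishes_on_genideal:
  assumes X: "X \<in> S \<rightarrow> carrier_mat n n" and "Rel \<subseteq> carrier (free_ring S)"
    and "\<And>r. r \<in> Rel \<Longrightarrow> rho r = 0\<^sub>m n n" and "\<And>r. r \<in> Rel \<Longrightarrow> free_deriv P n X r = 0\<^sub>m n n"
    and "f \<in> genideal (free_ring S) Rel"
  shows "free_deriv P n X f = 0\<^sub>m n n"
  using ring.genideal_minimal[OF ring_free_ring ideal_free_deriv_kernel[OF X], of Rel] assms by auto

end

locale mat_presentation =
  fixes S :: "'a set" and n :: nat and pi :: "('a list \<Rightarrow> int) \<Rightarrow> int mat"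
    and Rel :: "('a list \<Rightarrow> int) set"
  assumes ring_free_ring: "ring (free_ring S)"
    and pi_hom: "pi \<in> Ring.ring_hom (free_ring S) (Mat_Z n)"
    and pi_surj: "pi ` carrier (free_ring S) = carrier_mat n n"
    and n_pos: "0 < n"
    and relations: "Rel \<subseteq> carrier (free_ring S)"
    and kernel: "a_kernel (free_ring S) (Mat_Z n) pi = genideal (free_ring S) Rel"
begin

lemma pi_carrier: "f \<in> carrier (free_ring S) \<Longrightarrow> pi f \<in> carrier_mat n n"
  and pi_add: "f \<in> carrier (free_ring S) \<Longrightarrow> g \<in> carrier (free_ring S) \<Longrightarrow>
    pi (\<lambda>w. f w + g w) = pi f + pi g"
  and pi_mult: "f \<in> carrier (free_ring S) \<Longrightarrow> g \<in> carrier (free_ring S) \<Longrightarrow>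
    pi (f \<otimes>\<^bsub>free_ring S\<^esub> g) = pi f * pi g"
  and pi_one: "pi \<one>\<^bsub>free_ring S\<^esub> = 1\<^sub>m n"
  using pi_hom by (auto simp: Ring.ring_hom_def Mat_Z_def ring_mat_simps free_ring_simps(2))

lemma pi_relation: "r \<in> Rel \<Longrightarrow> pi r = 0\<^sub>m n n"
  using ring.genideal_self[OF ring_free_ring relations] kernel
  by (auto simp: a_kernel_def' Mat_Z_def ring_mat_simps)

lemma mat_rep_reduction: "free_ring_mat_rep S n (\<lambda>f. map_mat of_int (pi f) :: 'b::comm_ring_1 mat)"
proof (intro free_ring_mat_rep.intro ring_free_ring ring_hom_memI)
  fix f g assume f: "f \<in> carrier (free_ring S)" and g: "g \<in> carrier (free_ring S)"
  show "map_mat of_int (pi (f \<otimes>\<^bsub>free_ring S\<^esub> g)) = map_mat of_int (pi f) \<otimes>\<^bsub>ring_mat TYPE('b) n ()\<^esub> map_mat of_int (pi g)"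
    using of_int_hom.mat_hom_mult pi_carrier[OF f] pi_carrier[OF g] by (simp add: pi_mult[OF f g] ring_mat_simps)
  show "map_mat of_int (pi (f \<oplus>\<^bsub>free_ring S\<^esub> g)) = map_mat of_int (pi f) \<oplus>\<^bsub>ring_mat TYPE('b) n ()\<^esub> map_mat of_int (pi g)"
    using pi_carrier[OF f] pi_carrier[OF g]
    by (simp add: free_ring_simps(2) pi_add[OF f g] ring_mat_simps) (rule eq_matI, simp_all)
qed (simp_all add: pi_carrier pi_one ring_mat_simps of_int_hom.mat_hom_one)

abbreviation reduced_deriv :: "('a \<Rightarrow> 'b::comm_ring_1 mat) \<Rightarrow> ('a list \<Rightarrow> int) \<Rightarrow> 'b mat" where
  "reduced_deriv X \<equiv> free_deriv (\<lambda>w. map_mat of_int (pi (free_monom w))) n X"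

lemma reduced_deriv_factors_through_pi:
  fixes X :: "'a \<Rightarrow> 'b::comm_ring_1 mat"
  assumes X: "X \<in> S \<rightarrow> carrier_mat n n" and vanish: "\<And>r. r \<in> Rel \<Longrightarrow> reduced_deriv X r = 0\<^sub>m n n"
    and f: "f \<in> carrier (free_ring S)" and g: "g \<in> carrier (free_ring S)" and fg: "pi f = pi g"
  shows "reduced_deriv X f = reduced_deriv X g"
proof -
  interpret free_ring_mat_rep S n "\<lambda>f. map_mat of_int (pi f) :: 'b mat" by (rule mat_rep_reduction)
  define h where "h w = f w - g w" for w
  have supp: "{w. h w \<noteq> 0} \<subseteq> {w. f w \<noteq> 0} \<union> {w. g w \<noteq> 0}" by (auto simp: h_def)
  have "finite ({w. f w \<noteq> 0} \<union> {w. g w \<noteq> 0})" using f g by (simp add: free_ring_simps)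
  with supp have "finite {w. h w \<noteq> 0}" by (rule finite_subset)
  moreover have "set w \<subseteq> S" if "h w \<noteq> 0" for w
    using that supp f g by (auto simp: free_ring_simps)
  ultimately have h: "h \<in> carrier (free_ring S)" by (simp add: free_ring_simps)
  have f_eq: "f = (\<lambda>w. g w + h w)" by (simp add: h_def)
  have "pi h + pi g = 0\<^sub>m n n + pi g"
    using pi_add[OF g h] comm_add_mat[OF pi_carrier[OF g] pi_carrier[OF h]] pi_carrier[OF g] fg f_eq
    by simp
  then have "pi h = 0\<^sub>m n n"
    by (rule mat_add_right_cancel[OF pi_carrier[OF h] zero_carrier_mat pi_carrier[OF g]])
  then have "h \<in> genideal (free_ring S) Rel"
    using h kernel by (auto simp: a_kernel_def' Mat_Z_def ring_mat_simps)
  moreover have "map_mat of_int (pi r) = 0\<^sub>m n n" if "r \<in> Rel" for r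
    using pi_relation[OF that] by (intro eq_matI) simp_all
  ultimately have "reduced_deriv X h = 0\<^sub>m n n"
    using free_deriv_vanishes_on_genideal[OF X relations _ vanish] by blast
  then show ?thesis
    using f_eq free_deriv_add_carrier[OF g h] by simp
qed

definition descended_deriv :: "('a \<Rightarrow> 'b::comm_ring_1 mat) \<Rightarrow> int mat \<Rightarrow> 'b mat" where
  "descended_deriv X m = reduced_deriv X (SOME f. f \<in> carrier (free_ring S) \<and> pi f = m)"

lemma descended_deriv_pi:
  fixes X :: "'a \<Rightarrow> 'b::comm_ring_1 mat"
  assumes X: "X \<in> S \<rightarrow> carrier_mat n n" and vanish: "\<And>r. r \<in> Rel \<Longrightarrow> reduced_deriv X r = 0\<^sub>m n n"
    and f: "f \<in> carrier (free_ring S)"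
  shows "descended_deriv X (pi f) = reduced_deriv X f"
proof -
  have "\<exists>g. g \<in> carrier (free_ring S) \<and> pi g = pi f" using f by blast
  then have "(SOME g. g \<in> carrier (free_ring S) \<and> pi g = pi f) \<in> carrier (free_ring S) \<and>
      pi (SOME g. g \<in> carrier (free_ring S) \<and> pi g = pi f) = pi f"
    by (rule someI_ex)
  then show ?thesis
    unfolding descended_deriv_def using reduced_deriv_factors_through_pi[OF X vanish _ f] by blast
qed

lemma int_mat_derivation_descended_deriv:
  fixes X :: "'a \<Rightarrow> 'b::comm_ring_1 mat"
  assumes X: "X \<in> S \<rightarrow> carrier_mat n n" and vanish: "\<And>r. r \<in> Rel \<Longrightarrow> reduced_deriv X r = 0\<^sub>m n n"
  shows "int_mat_derivation n (descended_deriv X)"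
proof (rule int_mat_derivation.intro)
  interpret R: ring "free_ring S" by (rule ring_free_ring)
  interpret free_ring_mat_rep S n "\<lambda>f. map_mat of_int (pi f) :: 'b mat" by (rule mat_rep_reduction)
  fix m m' :: "int mat" assume "m \<in> carrier_mat n n" "m' \<in> carrier_mat n n"
  then have "m \<in> pi ` carrier (free_ring S)" "m' \<in> pi ` carrier (free_ring S)"
    using pi_surj by simp_all
  then obtain f f' where f: "f \<in> carrier (free_ring S)" "m = pi f"
    and f': "f' \<in> carrier (free_ring S)" "m' = pi f'"
    by blast
  have sum: "(\<lambda>w. f w + f' w) \<in> carrier (free_ring S)"
    using R.a_closed[OF f(1) f'(1)] by (simp add: free_ring_simps)
  have "descended_deriv X (m + m') = descended_deriv X (pi (\<lambda>w. f w + f' w))"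
    using pi_add[OF f(1) f'(1)] f(2) f'(2) by simp
  also have "\<dots> = reduced_deriv X f + reduced_deriv X f'"
    using descended_deriv_pi[OF X vanish sum] free_deriv_add_carrier[OF f(1) f'(1)] by simp
  finally show "descended_deriv X (m + m') = descended_deriv X m + descended_deriv X m'"
    using descended_deriv_pi[OF X vanish] f f' by simp
  have "descended_deriv X (m * m') = descended_deriv X (pi (f \<otimes>\<^bsub>free_ring S\<^esub> f'))"
    using pi_mult[OF f(1) f'(1)] f(2) f'(2) by simp
  also have "\<dots> = reduced_deriv X f * map_mat of_int (pi f') + map_mat of_int (pi f) * reduced_deriv X f'"
    using descended_deriv_pi[OF X vanish R.m_closed[OF f(1) f'(1)]] free_deriv_mult[OF X f(1) f'(1)] by simp
  finally show "descended_deriv X (m * m') = descended_deriv X m * map_mat of_int m' + map_mat of_int m * descended_deriv X m'"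
    using descended_deriv_pi[OF X vanish] f f' by simp
qed (simp_all add: n_pos descended_deriv_def)

lemma reduced_deriv_kernel_inner:
  fixes X :: "'a \<Rightarrow> 'b::comm_ring_1 mat"
  assumes X: "X \<in> S \<rightarrow> carrier_mat n n" and vanish: "\<And>r. r \<in> Rel \<Longrightarrow> reduced_deriv X r = 0\<^sub>m n n"
  shows "\<exists>Y \<in> carrier_mat n n. Y $$ (0, 0) = 0 \<and>
    (\<forall>s \<in> S. X s = map_mat of_int (pi (free_monom [s])) * Y - Y * map_mat of_int (pi (free_monom [s])))"
proof -
  interpret free_ring_mat_rep S n "\<lambda>f. map_mat of_int (pi f) :: 'b mat" by (rule mat_rep_reduction)
  interpret int_mat_derivation n "descended_deriv X"
    by (rule int_mat_derivation_descended_deriv[OF X vanish])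
  obtain Y where Y: "Y \<in> carrier_mat n n" "Y $$ (0, 0) = 0"
    and inner: "\<And>m. m \<in> carrier_mat n n \<Longrightarrow> descended_deriv X m = map_mat of_int m * Y - Y * map_mat of_int m"
    using inner_derivation by blast
  have "X s = descended_deriv X (pi (free_monom [s]))" if s: "s \<in> S" for s
  proof -
    have "X s \<in> carrier_mat n n" "P [s] \<in> carrier_mat n n"
      using X s pi_carrier[OF free_monom_carrier[of "[s]" S]] by auto
    then have "X s = word_deriv P n X [s]" by (simp add: P_Nil)
    also have "\<dots> = reduced_deriv X (free_monom [s])"
      using free_deriv_free_monom[OF X] s by simp
    finally show ?thesis
      using descended_deriv_pi[OF X vanish free_monom_carrier] s by simp
  qed
  then have "\<forall>s \<in> S. X s = map_mat of_int (pi (free_monom [s])) * Y - Y * map_mat of_int (pi (free_monom [s]))"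
    using inner pi_carrier[OF free_monom_carrier] by auto
  with Y show ?thesis by blast
qed

definition kernel_families :: "('a \<Rightarrow> 'b::comm_ring_1 mat) set" where
  "kernel_families = {X \<in> S \<rightarrow>\<^sub>E carrier_mat n n. \<forall>r \<in> Rel. reduced_deriv X r = 0\<^sub>m n n}"

text \<open>The normalisation \<open>Y $$ (0, 0) = 0\<close> makes the inner generators range over a proper
  subset of the matrices.\<close>

lemma card_kernel_families_less:
  "card (kernel_families :: ('a \<Rightarrow> 'b::{finite,comm_ring_1} mat) set) < card (carrier_mat n n :: 'b mat set)"
proof -
  let ?M = "carrier_mat n n :: 'b mat set"
  let ?P = "\<lambda>s. map_mat of_int (pi (free_monom [s])) :: 'b mat"
  let ?inner = "\<lambda>X Y. Y \<in> ?M \<and> Y $$ (0, 0) = 0 \<and> (\<forall>s \<in> S. X s = ?P s * Y - Y * ?P s)"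
  define Y where "Y X = (SOME Y. ?inner X Y)" for X
  have Y: "?inner X (Y X)" if X: "X \<in> kernel_families" for X
  proof -
    have "X \<in> S \<rightarrow> carrier_mat n n" "\<And>r. r \<in> Rel \<Longrightarrow> reduced_deriv X r = 0\<^sub>m n n"
      using X by (auto simp: kernel_families_def)
    then have "\<exists>Y. ?inner X Y" by (blast dest: reduced_deriv_kernel_inner)
    then show ?thesis unfolding Y_def by (rule someI_ex)
  qed
  have "card (kernel_families :: ('a \<Rightarrow> 'b mat) set) \<le> card {Y \<in> ?M. Y $$ (0, 0) = 0}"
  proof (rule card_inj_on_le)
    show "inj_on Y kernel_families"
    proof (rule inj_onI)
      fix X X' assume X: "X \<in> kernel_families" and X': "X' \<in> kernel_families" and "Y X = Y X'"
      then have "X s = X' s" if "s \<in> S" for s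
        using Y[OF X] Y[OF X'] that by (simp only:)
      with X X' show "X = X'" by (auto simp: kernel_families_def intro: PiE_ext)
    qed
    show "Y ` kernel_families \<subseteq> {Y \<in> ?M. Y $$ (0, 0) = 0}" using Y by blast
  qed (rule finite_subset[OF _ finite_carrier_mat], blast)
  also have "\<dots> < card ?M"
  proof (rule psubset_card_mono[OF finite_carrier_mat])
    have "1\<^sub>m n \<in> ?M - {Y \<in> ?M. Y $$ (0, 0) = 0}" using n_pos by simp
    then show "{Y \<in> ?M. Y $$ (0, 0) = 0} \<subset> ?M" by blast
  qed
  finally show ?thesis .
qed

lemma card_fibre_le_card_kernel_families:
  fixes X0 :: "'a \<Rightarrow> 'b::{finite,comm_ring_1} mat"
  assumes S: "finite S" and X0: "X0 \<in> S \<rightarrow>\<^sub>E carrier_mat n n"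
  shows "card {X \<in> S \<rightarrow>\<^sub>E carrier_mat n n. \<forall>r \<in> Rel. reduced_deriv X r = reduced_deriv X0 r}
    \<le> card (kernel_families :: ('a \<Rightarrow> 'b mat) set)"
proof (rule card_inj_on_le)
  interpret free_ring_mat_rep S n "\<lambda>f. map_mat of_int (pi f) :: 'b mat" by (rule mat_rep_reduction)
  define tau where "tau X = restrict (\<lambda>a. X a - X0 a) S" for X :: "'a \<Rightarrow> 'b mat"
  let ?F = "{X \<in> S \<rightarrow>\<^sub>E carrier_mat n n. \<forall>r \<in> Rel. reduced_deriv X r = reduced_deriv X0 r}"
  have tau_add: "tau X a + X0 a = X a" if "X \<in> S \<rightarrow>\<^sub>E carrier_mat n n" "a \<in> S" for X a
    using that X0 by (auto simp: tau_def intro: mat_diff_add_cancel)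
  show "inj_on tau ?F"
  proof (rule inj_onI)
    fix X X' assume X: "X \<in> ?F" and X': "X' \<in> ?F" and eq: "tau X = tau X'"
    have "X a = X' a" if "a \<in> S" for a
      using tau_add[of X a] tau_add[of X' a] X X' eq that by simp
    with X X' show "X = X'" by (auto intro: PiE_ext)
  qed
  show "tau ` ?F \<subseteq> kernel_families"
  proof (rule image_subsetI)
    fix X assume X: "X \<in> ?F"
    have tauX: "tau X \<in> S \<rightarrow>\<^sub>E carrier_mat n n"
      using X0 by (auto simp: tau_def intro!: minus_carrier_mat)
    have "reduced_deriv (tau X) r = 0\<^sub>m n n" if r: "r \<in> Rel" for r
    proof -
      have rc: "r \<in> carrier (free_ring S)" using r relations by blast
      have "reduced_deriv (tau X) r + reduced_deriv X0 r = reduced_deriv (\<lambda>a. tau X a + X0 a) r"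
        using free_deriv_add_family[OF _ _ rc, of "tau X" X0] tauX X0 by (simp add: PiE_iff)
      also have "\<dots> = reduced_deriv X r"
      proof (rule free_deriv_cong)
        fix w a assume "r w \<noteq> 0" "a \<in> set w"
        then have "a \<in> S" using rc by (auto simp: free_ring_simps)
        then show "tau X a + X0 a = X a" using tau_add X by blast
      qed
      also have "\<dots> = 0\<^sub>m n n + reduced_deriv X0 r" using X r by simp
      finally show ?thesis by (rule mat_add_right_cancel[OF free_deriv_carrier zero_carrier_mat free_deriv_carrier])
    qed
    with tauX show "tau X \<in> kernel_families" by (simp add: kernel_families_def)
  qed
  show "finite (kernel_families :: ('a \<Rightarrow> 'b mat) set)"
    using finite_PiE[OF S, of "\<lambda>_. carrier_mat n n :: 'b mat set"] finite_carrier_mat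
    unfolding kernel_families_def by (auto intro: finite_subset[of _ "S \<rightarrow>\<^sub>E carrier_mat n n"])
qed

lemma card_power_generators_less:
  assumes S: "finite S" and R: "finite Rel"
  shows "card (carrier_mat n n :: 'b::{finite,comm_ring_1} mat set) ^ card S
    < card (carrier_mat n n :: 'b mat set) ^ Suc (card Rel)"
proof -
  let ?M = "carrier_mat n n :: 'b mat set"
  let ?F = "S \<rightarrow>\<^sub>E ?M" and ?K = "kernel_families :: ('a \<Rightarrow> 'b mat) set"
  define Phi where "Phi X = restrict (\<lambda>r. reduced_deriv X r) Rel" for X :: "'a \<Rightarrow> 'b mat"
  have "card ?M ^ card S = card ?F" using S by (simp add: card_PiE)
  also have "\<dots> \<le> card (Phi ` ?F) * card ?K"
  proof (rule card_le_card_image_mult)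
    show "finite ?F" using S by (simp add: finite_PiE finite_carrier_mat)
    fix y assume "y \<in> Phi ` ?F"
    then obtain X0 where X0: "X0 \<in> ?F" "y = Phi X0" by blast
    have "{X \<in> ?F. Phi X = y} = {X \<in> ?F. \<forall>r \<in> Rel. reduced_deriv X r = reduced_deriv X0 r}"
      by (auto simp: X0(2) Phi_def restrict_def fun_eq_iff)
    then show "card {X \<in> ?F. Phi X = y} \<le> card ?K"
      using card_fibre_le_card_kernel_families[OF S X0(1)] by simp
  qed
  also have "\<dots> \<le> card (Rel \<rightarrow>\<^sub>E ?M) * card ?K"
    using R by (intro mult_le_mono1 card_mono) (auto simp: Phi_def finite_PiE finite_carrier_mat)
  also have "\<dots> = card ?M ^ card Rel * card ?K" using R by (simp add: card_PiE)
  also have "\<dots> < card ?M ^ card Rel * card ?M"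
    using card_kernel_families_less finite_carrier_mat[of n n] zero_carrier_mat[of n n]
    by (intro mult_strict_left_mono) (auto simp: card_gt_0_iff)
  finally show ?thesis by (simp add: mult.commute)
qed

lemma card_generators_le_card_relations:
  assumes "finite S" and "finite Rel"
  shows "card S \<le> card Rel"
proof -
  \<comment> \<open>any finite nontrivial coefficient ring works; take \<open>\<int>/2\<close>\<close>
  let ?M = "carrier_mat n n :: 2 mat set"
  have "(0\<^sub>m n n :: 2 mat) $$ (0, 0) \<noteq> 1\<^sub>m n $$ (0, 0)" using n_pos by simp
  then have "(0\<^sub>m n n :: 2 mat) \<noteq> 1\<^sub>m n" by metis
  then have "card {0\<^sub>m n n :: 2 mat, 1\<^sub>m n} \<le> card ?M"
    by (intro card_mono finite_carrier_mat) auto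
  with \<open>0\<^sub>m n n \<noteq> 1\<^sub>m n\<close> have "1 < card ?M" by simp
  from power_less_imp_less_exp[OF this card_power_generators_less[OF assms]] show ?thesis by simp
qed

end

lemma ring_free_ring_if_presents:
  assumes iso: "free_ring S Quot genideal (free_ring S) Rel \<simeq> Mat_Z n" and n: "0 < n"
  shows "ring (free_ring S)"
proof (rule ccontr)
  assume "\<not> ring (free_ring S)"
  then have "{I. ideal I (free_ring S) \<and> Rel \<subseteq> I} = {}" by (auto dest: ideal.axioms(2))
  then have J: "genideal (free_ring S) Rel = UNIV" by (auto simp: genideal_def)
  have coset: "J +>\<^bsub>free_ring S\<^esub> a = UNIV" if "J = UNIV" for J a
  proof -
    have "x \<in> (\<Union>g\<in>UNIV. {g \<oplus>\<^bsub>free_ring S\<^esub> a})" for x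
    proof
      show "x \<in> {(\<lambda>w. x w - a w) \<oplus>\<^bsub>free_ring S\<^esub> a}" by (simp add: free_ring_simps)
    qed simp
    then show ?thesis using that by (auto simp: a_r_coset_def')
  qed
  have "carrier (free_ring S Quot genideal (free_ring S) Rel) \<subseteq> {UNIV}"
  proof
    fix c assume "c \<in> carrier (free_ring S Quot genideal (free_ring S) Rel)"
    then obtain a where "c = genideal (free_ring S) Rel +>\<^bsub>free_ring S\<^esub> a"
      by (auto simp: FactRing_def A_RCOSETS_def')
    with J coset show "c \<in> {UNIV}" by simp
  qed
  moreover obtain h where "h \<in> ring_iso (free_ring S Quot genideal (free_ring S) Rel) (Mat_Z n)"
    using iso by (auto simp: is_ring_iso_def)
  then have "bij_betw h (carrier (free_ring S Quot genideal (free_ring S) Rel)) (carrier (Mat_Z n))"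
    by (rule ring_iso_memE(5))
  then have "h ` carrier (free_ring S Quot genideal (free_ring S) Rel) = carrier_mat n n"
    by (simp add: bij_betw_def Mat_Z_def ring_mat_simps)
  ultimately have "carrier_mat n n \<subseteq> {h UNIV}" by blast
  then have "0\<^sub>m n n \<in> {h UNIV}" and "1\<^sub>m n \<in> {h UNIV}"
    by (rule subsetD, simp)+
  then have "(0\<^sub>m n n :: int mat) $$ (0, 0) = 1\<^sub>m n $$ (0, 0)" by simp
  with n show False by simp
qed

lemma (in ideal) a_kernel_inj_rcos:
  assumes hom: "h \<in> Ring.ring_hom (R Quot I) S" and inj: "inj_on h (carrier (R Quot I))"
    and S: "ring S"
  shows "a_kernel R S (\<lambda>a. h (I +> a)) = I"
proof
  have h_I: "h I = \<zero>\<^bsub>S\<^esub>"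
    using ring_hom_zero[OF hom quotient_is_ring S] by (simp add: FactRing_def)
  have I_coset: "I +> a = I" if "a \<in> I" for a
    by (rule a_rcos_zero[OF is_ideal that])
  show "a_kernel R S (\<lambda>a. h (I +> a)) \<subseteq> I"
  proof
    fix a assume "a \<in> a_kernel R S (\<lambda>a. h (I +> a))"
    then have a: "a \<in> carrier R" and "h (I +> a) = h I" by (simp_all add: a_kernel_def' h_I)
    moreover have "I +> a \<in> carrier (R Quot I)" using a by (auto simp: FactRing_def A_RCOSETS_def')
    moreover have "I \<in> carrier (R Quot I)"
      using I_coset[OF additive_subgroup.zero_closed[OF additive_subgroup_axioms]]
      by (force simp: FactRing_def A_RCOSETS_def')
    ultimately have "I +> a = I" by (intro inj_onD[OF inj])
    with a show "a \<in> I" by (rule rcos_const_imp_mem)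
  qed
  show "I \<subseteq> a_kernel R S (\<lambda>a. h (I +> a))"
    using I_coset Icarr h_I by (auto simp: a_kernel_def')
qed

lemma mat_presentation_if_iso:
  assumes ring: "ring (free_ring S)" and n: "0 < n" and Rel: "Rel \<subseteq> carrier (free_ring S)"
    and iso: "free_ring S Quot genideal (free_ring S) Rel \<simeq> Mat_Z n"
  shows "\<exists>pi. mat_presentation S n pi Rel"
proof -
  interpret R: ring "free_ring S" by (rule ring)
  let ?J = "genideal (free_ring S) Rel"
  interpret J: ideal ?J "free_ring S" by (rule R.genideal_ideal[OF Rel])
  obtain h where h: "h \<in> ring_iso (free_ring S Quot ?J) (Mat_Z n)"
    using iso by (auto simp: is_ring_iso_def)
  have hom: "h \<in> Ring.ring_hom (free_ring S Quot ?J) (Mat_Z n)" using h by (simp add: ring_iso_def)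
  have bij: "bij_betw h (carrier (free_ring S Quot ?J)) (carrier_mat n n)"
    using ring_iso_memE(5)[OF h] by (simp add: Mat_Z_def ring_mat_simps)
  have quot: "carrier (free_ring S Quot ?J) = (\<lambda>f. ?J +>\<^bsub>free_ring S\<^esub> f) ` carrier (free_ring S)"
    by (auto simp: FactRing_def A_RCOSETS_def')
  define pi where "pi = (\<lambda>f. h (?J +>\<^bsub>free_ring S\<^esub> f))"
  have "mat_presentation S n pi Rel"
  proof
    show "pi \<in> Ring.ring_hom (free_ring S) (Mat_Z n)"
      using ring_hom_trans[OF J.rcos_ring_hom hom] by (simp add: pi_def comp_def)
    show "pi ` carrier (free_ring S) = carrier_mat n n"
      using bij_betw_imp_surj_on[OF bij] by (simp add: quot image_image pi_def)
    show "a_kernel (free_ring S) (Mat_Z n) pi = ?J"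
      unfolding pi_def using bij_betw_imp_inj_on[OF bij] ring_mat[of n "()"]
      by (intro J.a_kernel_inj_rcos[OF hom]) (simp_all add: Mat_Z_def)
  qed (use ring n Rel in auto)
  then show ?thesis by blast
qed

theorem theorem3:
  fixes n :: nat and S :: "'a set" and Rel :: "('a list \<Rightarrow> int) set"
  assumes "n \<ge> 2"
    and "finite S"
    and "Rel \<subseteq> carrier (free_ring S)"
    and "(free_ring S) Quot (genideal (free_ring S) Rel) \<simeq> Mat_Z n"
  shows "infinite Rel \<or> card S \<le> card Rel"
proof -
  have n: "0 < n" using assms(1) by simp
  have "ring (free_ring S)" using ring_free_ring_if_presents[OF assms(4) n] .
  then obtain pi where "mat_presentation S n pi Rel"
    using mat_presentation_if_iso[OF _ n assms(3,4)] by blast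
  then show ?thesis
    using mat_presentation.card_generators_le_card_relations[OF _ assms(2)] by blast
qed

end
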